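(* For any formula $A$, the sequent $\Box(\Box(A\to\Box A)\to A)\Rightarrow A$ is provable in $\mathsf{Grz}_\infty$.
   Context: Formulas are built from $\bot$ and atomic propositions using $\to$ and $\Box$. A sequent is $\Gamma\Rightarrow\Delta$ with $\Gamma,\Delta$ finite multisets of formulas; $\Box\Pi$ denotes the multiset $\{\Box B:B\in\Pi\}$. The calculus $\mathsf{Grz}_\infty$ has initial sequents $\Gamma,p\Rightarrow p,\Delta$ ($p$ atomic) and $\Gamma,\bot\Rightarrow\Delta$, and rules: $(\to_L)$ from $\Gamma,B\Rightarrow\Delta$ and $\Gamma\Rightarrow A,\Delta$ infer $\Gamma,A\to B\Rightarrow\Delta$; $(\to_R)$ from $\Gamma,A\Rightarrow B,\Delta$ infer $\Gamma\Rightarrow A\to B,\Delta$; $(\mathsf{refl})$ from $\Gamma,B,\Box B\Rightarrow\Delta$ infer $\Gamma,\Box B\Rightarrow\Delta$; $(\Box)$ from left premise $\Gamma,\Box\Pi\Rightarrow A,\Delta$ and right premise $\Box\Pi\Rightarrow A$ infer $\Gamma,\Box\Pi\Rightarrow\Box A,\Delta$. An $\infty$-proof is a possibly infinite tree of sequents built by these rules, with leaves labelled by initial sequents, in which every infinite branch passes through a right premise of $(\Box)$ infinitely often; a sequent is provable if it labels the root of an $\infty$-proof. *)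

theory Defs
  imports Main "HOL-Library.Multiset"
begin

datatype fm = Bot | At nat | Imp fm fm | Box fm

type_synonym sequent = "fm multiset \<times> fm multiset"

(* rule labels of Grz_infinity; Ax covers both kinds of initial sequents *)
datatype rule = Ax | ImpL | ImpR | Refl | BoxR

fun nprem :: "rule \<Rightarrow> nat" where
  "nprem Ax = 0" | "nprem ImpL = 2" | "nprem ImpR = 1" | "nprem Refl = 1" | "nprem BoxR = 2"

definition initial :: "sequent \<Rightarrow> bool" where
  "initial s \<longleftrightarrow> (\<exists>p. At p \<in># fst s \<and> At p \<in># snd s) \<or> Bot \<in># fst s"

fun rule_inst :: "rule \<Rightarrow> sequent \<Rightarrow> sequent list \<Rightarrow> bool" where
  "rule_inst Ax s ps \<longleftrightarrow> ps = [] \<and> initial s"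
| "rule_inst ImpL (G, D) ps \<longleftrightarrow> (\<exists>\<Gamma> A B. G = add_mset (Imp A B) \<Gamma> \<and>
      ps = [(add_mset B \<Gamma>, D), (\<Gamma>, add_mset A D)])"
| "rule_inst ImpR (G, D) ps \<longleftrightarrow> (\<exists>\<Delta> A B. D = add_mset (Imp A B) \<Delta> \<and>
      ps = [(add_mset A G, add_mset B \<Delta>)])"
| "rule_inst Refl (G, D) ps \<longleftrightarrow> (\<exists>\<Gamma> B. G = add_mset (Box B) \<Gamma> \<and>
      ps = [(add_mset B (add_mset (Box B) \<Gamma>), D)])"
| "rule_inst BoxR (G, D) ps \<longleftrightarrow> (\<exists>\<Gamma> \<Pi> A \<Delta>. G = \<Gamma> + image_mset Box \<Pi> \<and> D = add_mset (Box A) \<Delta> \<and>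
      ps = [(\<Gamma> + image_mset Box \<Pi>, add_mset A \<Delta>), (image_mset Box \<Pi>, {#A#})])"

(* A possibly infinite proof tree: nodes are addresses (nat lists), T the set of nodes,
   lab the sequent at a node, rl the rule applied at a node; child i of xs is xs @ [i].
   The right premise of BoxR is child number 1. *)
definition inf_proof :: "nat list set \<Rightarrow> (nat list \<Rightarrow> sequent) \<Rightarrow> (nat list \<Rightarrow> rule) \<Rightarrow> bool" where
  "inf_proof T lab rl \<longleftrightarrow>
     [] \<in> T \<and>
     (\<forall>xs i. xs @ [i] \<in> T \<longrightarrow> xs \<in> T) \<and>
     (\<forall>xs\<in>T. (\<forall>i. xs @ [i] \<in> T \<longleftrightarrow> i < nprem (rl xs)) \<and>
        rule_inst (rl xs) (lab xs) (map (\<lambda>i. lab (xs @ [i])) [0..<nprem (rl xs)])) \<and>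
     (\<forall>f :: nat \<Rightarrow> nat. (\<forall>n. map f [0..<n] \<in> T) \<longrightarrow>
        (\<forall>m. \<exists>n\<ge>m. rl (map f [0..<n]) = BoxR \<and> f n = 1))"

definition provable :: "sequent \<Rightarrow> bool" where
  "provable s \<longleftrightarrow> (\<exists>T lab rl. inf_proof T lab rl \<and> lab [] = s)"

end

(* Write grz A = Box (A -> Box A) -> A.  The root sequent Box (grz A) => A has a cyclic
   derivation: (refl) and (->L) on grz A leave Box (grz A) => Box (A -> Box A), A, which
   (Box) and (->R) reduce to identities and to A, Box (grz A) => Box A; the (Box) step on
   that sequent has the root itself as right premise.  Unfolding this finite graph gives
   an infinite proof, and every infinite branch passes a right premise of (Box) infinitely
   often, because a rank that falls along all other edges cannot fall forever.  Identity
   sequents B, G => B, D are expanded inside the same graph, ranked by the size of B. *)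

theory Submission
  imports Defs
begin

definition graph_node :: "('a \<Rightarrow> rule \<times> 'a list) \<Rightarrow> 'a \<Rightarrow> nat list \<Rightarrow> 'a" where
  "graph_node st a0 xs = foldl (\<lambda>a i. snd (st a) ! i) a0 xs"

definition graph_paths :: "('a \<Rightarrow> rule \<times> 'a list) \<Rightarrow> 'a \<Rightarrow> nat list set" where
  "graph_paths st a0 =
     {xs. \<forall>k<length xs. xs ! k < length (snd (st (graph_node st a0 (take k xs))))}"

lemma graph_node_Nil [simp]: "graph_node st a0 [] = a0"
  by (simp add: graph_node_def)

lemma graph_node_snoc: "graph_node st a0 (xs @ [i]) = snd (st (graph_node st a0 xs)) ! i"
  by (simp add: graph_node_def)

lemma Nil_in_graph_paths: "[] \<in> graph_paths st a0"
  by (simp add: graph_paths_def)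

lemma snoc_in_graph_paths_iff:
  "xs @ [i] \<in> graph_paths st a0 \<longleftrightarrow>
     xs \<in> graph_paths st a0 \<and> i < length (snd (st (graph_node st a0 xs)))"
  by (auto simp: graph_paths_def nth_append less_Suc_eq)

lemma graph_path_visits_unranked_edge:
  fixes m :: "'a \<Rightarrow> nat"
  assumes paths: "\<And>n. map f [0..<n] \<in> graph_paths st a0"
    and rank_decreases: "\<And>a i. i < length (snd (st a)) \<Longrightarrow> \<not> (fst (st a) = BoxR \<and> i = 1) \<Longrightarrow>
        m (snd (st a) ! i) < m a"
  shows "\<exists>n\<ge>n0. fst (st (graph_node st a0 (map f [0..<n]))) = BoxR \<and> f n = 1"
proof (rule ccontr)
  assume no_visit: "\<not> ?thesis"
  define g where "g k = m (graph_node st a0 (map f [0..<n0 + k]))" for k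
  have "g (Suc k) < g k" for k
  proof -
    let ?a = "graph_node st a0 (map f [0..<n0 + k])"
    have "map f [0..<n0 + k] @ [f (n0 + k)] \<in> graph_paths st a0"
      using paths[of "Suc (n0 + k)"] by simp
    then have "f (n0 + k) < length (snd (st ?a))"
      by (simp add: snoc_in_graph_paths_iff)
    moreover have "\<not> (fst (st ?a) = BoxR \<and> f (n0 + k) = 1)"
      using no_visit by auto
    ultimately show ?thesis
      using rank_decreases by (simp add: g_def graph_node_snoc)
  qed
  then show False
    using wf_no_infinite_down_chainE[OF wf_less_than, of g] by simp
qed

lemma provable_if_ranked_proof_graph:
  fixes lab :: "'a \<Rightarrow> sequent" and st :: "'a \<Rightarrow> rule \<times> 'a list" and m :: "'a \<Rightarrow> nat"
  assumes rule_ok: "\<And>a. rule_inst (fst (st a)) (lab a) (map lab (snd (st a)))"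
    and arity: "\<And>a. length (snd (st a)) = nprem (fst (st a))"
    and rank_decreases: "\<And>a i. i < length (snd (st a)) \<Longrightarrow> \<not> (fst (st a) = BoxR \<and> i = 1) \<Longrightarrow>
        m (snd (st a) ! i) < m a"
  shows "provable (lab a0)"
proof -
  let ?T = "graph_paths st a0"
  define lab' where "lab' xs = lab (graph_node st a0 xs)" for xs
  define rl where "rl xs = fst (st (graph_node st a0 xs))" for xs
  have premise_labels:
    "map (\<lambda>i. lab' (xs @ [i])) [0..<nprem (rl xs)] = map lab (snd (st (graph_node st a0 xs)))" for xs
    unfolding lab'_def graph_node_snoc rl_def arity[symmetric]
    by (rule nth_equalityI) simp_all
  have "inf_proof ?T lab' rl"
    unfolding inf_proof_def
  proof (intro conjI allI impI ballI)
    fix xs assume "xs \<in> ?T"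
    show "rule_inst (rl xs) (lab' xs) (map (\<lambda>i. lab' (xs @ [i])) [0..<nprem (rl xs)])"
      unfolding premise_labels unfolding lab'_def rl_def by (rule rule_ok)
  next
    fix f :: "nat \<Rightarrow> nat" and n0
    assume "\<forall>n. map f [0..<n] \<in> ?T"
    then show "\<exists>n\<ge>n0. rl (map f [0..<n]) = BoxR \<and> f n = 1"
      unfolding rl_def by (blast intro: graph_path_visits_unranked_edge rank_decreases)
  qed (auto simp: Nil_in_graph_paths snoc_in_graph_paths_iff arity rl_def)
  then show ?thesis
    unfolding provable_def by (metis graph_node_Nil lab'_def)
qed

lemma rule_inst_BoxR_I:
  "rule_inst BoxR (\<Gamma> + image_mset Box \<Pi>, add_mset (Box A) \<Delta>)
     [(\<Gamma> + image_mset Box \<Pi>, add_mset A \<Delta>), (image_mset Box \<Pi>, {#A#})]"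
  by auto

abbreviation grz :: "fm \<Rightarrow> fm" where
  "grz A \<equiv> Imp (Box (Imp A (Box A))) A"

datatype node =
    Ident "fm multiset" "fm multiset" fm
  | Ident_box "fm multiset" "fm multiset" fm
  | Ident_imp "fm multiset" "fm multiset" fm fm
  | Cycle0 | Cycle1 | Cycle2 | Cycle3 | Cycle4 | Cycle5

fun node_sequent :: "fm \<Rightarrow> node \<Rightarrow> sequent" where
  "node_sequent A (Ident G D B) = (add_mset B G, add_mset B D)"
| "node_sequent A (Ident_box G D C) = (add_mset (Box C) G, add_mset C D)"
| "node_sequent A (Ident_imp G D C E) = (add_mset C (add_mset (Imp C E) G), add_mset E D)"
| "node_sequent A Cycle0 = ({#Box (grz A)#}, {#A#})"
| "node_sequent A Cycle1 = ({#grz A, Box (grz A)#}, {#A#})"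
| "node_sequent A Cycle2 = ({#Box (grz A)#}, {#Box (Imp A (Box A)), A#})"
| "node_sequent A Cycle3 = ({#Box (grz A)#}, {#Imp A (Box A), A#})"
| "node_sequent A Cycle4 = ({#Box (grz A)#}, {#Imp A (Box A)#})"
| "node_sequent A Cycle5 = ({#A, Box (grz A)#}, {#Box A#})"

fun node_step :: "fm \<Rightarrow> node \<Rightarrow> rule \<times> node list" where
  "node_step A (Ident G D Bot) = (Ax, [])"
| "node_step A (Ident G D (At p)) = (Ax, [])"
| "node_step A (Ident G D (Imp C E)) = (ImpR, [Ident_imp G D C E])"
| "node_step A (Ident G D (Box C)) = (BoxR, [Ident_box G D C, Ident_box {#} {#} C])"
| "node_step A (Ident_box G D C) = (Refl, [Ident (add_mset (Box C) G) D C])"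
| "node_step A (Ident_imp G D C E) = (ImpL, [Ident (add_mset C G) D E, Ident G (add_mset E D) C])"
| "node_step A Cycle0 = (Refl, [Cycle1])"
| "node_step A Cycle1 = (ImpL, [Ident {#Box (grz A)#} {#} A, Cycle2])"
| "node_step A Cycle2 = (BoxR, [Cycle3, Cycle4])"
| "node_step A Cycle3 = (ImpR, [Ident {#Box (grz A)#} {#Box A#} A])"
| "node_step A Cycle4 = (ImpR, [Cycle5])"
| "node_step A Cycle5 = (BoxR, [Ident {#Box (grz A)#} {#} A, Cycle0])"

fun node_rank :: "fm \<Rightarrow> node \<Rightarrow> nat" where
  "node_rank A (Ident G D B) = 3 * size B"
| "node_rank A (Ident_box G D C) = 3 * size C + 1"
| "node_rank A (Ident_imp G D C E) = 3 * (size C + size E) + 1"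
| "node_rank A Cycle0 = 3 * size A + 10"
| "node_rank A Cycle1 = 3 * size A + 9"
| "node_rank A Cycle2 = 3 * size A + 8"
| "node_rank A Cycle3 = 3 * size A + 7"
| "node_rank A Cycle4 = 3 * size A + 7"
| "node_rank A Cycle5 = 3 * size A + 6"

lemma length_node_step: "length (snd (node_step A a)) = nprem (fst (node_step A a))"
  by (cases "(A, a)" rule: node_step.cases) auto

lemma node_rank_decreases:
  "i < length (snd (node_step A a)) \<Longrightarrow> \<not> (fst (node_step A a) = BoxR \<and> i = 1) \<Longrightarrow>
     node_rank A (snd (node_step A a) ! i) < node_rank A a"
  by (cases "(A, a)" rule: node_step.cases) (auto simp: less_Suc_eq nth_Cons')

lemma rule_inst_node_step:
  "rule_inst (fst (node_step A a)) (node_sequent A a) (map (node_sequent A) (snd (node_step A a)))"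
proof (cases "(A, a)" rule: node_step.cases)
  case (4 _ G D C)
  then show ?thesis
    using rule_inst_BoxR_I[of G "{#C#}" C D] by simp
next
  case 9
  then show ?thesis
    using rule_inst_BoxR_I[of "{#}" "{#grz A#}" "Imp A (Box A)" "{#A#}"] by simp
next
  case 10
  then show ?thesis
    by (auto simp: add_mset_commute intro!: exI[of _ "{#A#}"])
next
  case 12
  then show ?thesis
    using rule_inst_BoxR_I[of "{#A#}" "{#grz A#}" A "{#}"] by (simp add: add_mset_commute)
qed (auto simp: initial_def)

theorem lemma3p2:
  fixes A :: fm
  shows "provable ({# Box (Imp (Box (Imp A (Box A))) A) #}, {# A #})"
  using provable_if_ranked_proof_graph[OF rule_inst_node_step length_node_step node_rank_decreases,
      of A Cycle0]
  by simp

end
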